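(* Let $e\geqslant 1$ be an integer and $b\geqslant 2$ an even integer, and let $D_{e,b}$ be the cycle set for $T_{e,b}$. Assume that for every $x\in D_{e,b}$ there exists a positive integer $h_x$ such that both $h_x+1$ and $h_x+x$ are $(e,b)$-happy. Then there exists a positive integer $h$ such that $h+x$ is $(e,b)$-happy for every $x\in D_{e,b}$.
   Context: For a positive integer $n=\sum_{j=0}^k a_j b^j$ with $0\leqslant a_j<b$, $T_{e,b}(n)=\sum_{j=0}^k a_j^e$; $T_{e,b}^r$ is the $r$-th iterate, $T_{e,b}^0(n)=n$. A positive integer $n$ is $(e,b)$-happy if $T_{e,b}^r(n)=1$ for some $r\geqslant 0$. A set $D_{e,b}$ of positive integers is a cycle set for $T_{e,b}$ if (1) for every positive integer $n$ there is $r\geqslant 0$ with $T_{e,b}^r(n)\in D_{e,b}$; (2) $T_{e,b}(x)\in D_{e,b}$ for all $x\in D_{e,b}$; (3) for every $x\in D_{e,b}$ there is $r\geqslant 1$ with $T_{e,b}^r(x)=x$. Such a set is finite and uniquely determined (it is the set of positive integers $x$ with $T_{e,b}^r(x)=x$ for some $r\geqslant1$). *)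

theory Defs
  imports Main
begin

fun T :: "nat \<Rightarrow> nat \<Rightarrow> nat \<Rightarrow> nat" where
  "T e b n = (if n = 0 \<or> b < 2 then 0 else (n mod b) ^ e + T e b (n div b))"

definition happy :: "nat \<Rightarrow> nat \<Rightarrow> nat \<Rightarrow> bool" where
  "happy e b n \<longleftrightarrow> n > 0 \<and> (\<exists>r. (T e b ^^ r) n = 1)"

definition cycle_set :: "nat \<Rightarrow> nat \<Rightarrow> nat set \<Rightarrow> bool" where
  "cycle_set e b D \<longleftrightarrow>
     (\<forall>x\<in>D. x > 0) \<and>
     (\<forall>n>0. \<exists>r. (T e b ^^ r) n \<in> D) \<and>
     (\<forall>x\<in>D. T e b x \<in> D) \<and>
     (\<forall>x\<in>D. \<exists>r\<ge>1. (T e b ^^ r) x = x)"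

end

theory Submission
  imports Defs
begin

text \<open>
  Since the base-b digits of A * b^k + n are those of A followed by those of n (when n < b^k),
  prefixing a number n with c digits 1 raises T n by exactly c.
  Doing this recursively, one finds for every finite set N, every R and every g a single c with
  T^R (c + n) = g + T^R n for all n in N.  Now suppose that some h sends, after R steps, the
  elements of a finite S \<subseteq> D to 1, and that x \<in> D is new.  Moving further along the orbits we may
  assume that h + x is sent to some d \<in> D.  Choose g with g + 1 and g + d happy; the shift c
  then sends all h + c + y (y \<in> S) to g + 1 and h + c + x to g + d, all of which are happy.
  Since T n < n for large n, all cycles of T are bounded, so D is finite and induction over its
  subsets gives the theorem.
\<close>

declare T.simps[simp del]

lemma T_0 [simp]: "T e b 0 = 0"
  by (simp add: T.simps)

lemma T_pos: "0 < n \<Longrightarrow> 2 \<le> b \<Longrightarrow> T e b n = (n mod b) ^ e + T e b (n div b)"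
  by (subst T.simps) simp

text \<open>For e = 0 this fails at n = 0, because 0 ^ 0 = 1.\<close>

lemma T_digit_split: "1 \<le> e \<Longrightarrow> 2 \<le> b \<Longrightarrow> T e b n = (n mod b) ^ e + T e b (n div b)"
  by (cases "n = 0") (simp_all add: T_pos)

lemma T_1: "2 \<le> b \<Longrightarrow> T e b 1 = 1"
  by (simp add: T_pos)

lemma T_mult_power_add:
  assumes e: "1 \<le> e" and b: "2 \<le> b"
  shows "n < b ^ k \<Longrightarrow> T e b (a * b ^ k + n) = T e b a + T e b n"
proof (induction k arbitrary: n)
  case 0
  then show ?case by simp
next
  case (Suc k)
  have split: "a * b ^ Suc k + n = n + b * (a * b ^ k)"
    by (simp add: algebra_simps)
  have "n div b < b ^ k"
    using Suc.prems b by (simp add: less_mult_imp_div_less mult.commute)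
  moreover have "(a * b ^ Suc k + n) mod b = n mod b"
    and "(a * b ^ Suc k + n) div b = a * b ^ k + n div b"
    using b unfolding split by simp_all
  ultimately have "T e b (a * b ^ Suc k + n) = (n mod b) ^ e + (T e b a + T e b (n div b))"
    using T_digit_split[OF e b, of "a * b ^ Suc k + n"] Suc.IH by simp
  also have "\<dots> = T e b a + T e b n"
    using T_digit_split[OF e b, of n] by simp
  finally show ?case .
qed

fun repunit :: "nat \<Rightarrow> nat \<Rightarrow> nat" where
  "repunit b 0 = 0"
| "repunit b (Suc m) = repunit b m * b + 1"

lemma T_repunit: "2 \<le> b \<Longrightarrow> T e b (repunit b m) = m"
proof (induction m)
  case (Suc m)
  have "(repunit b m * b + 1) mod b = 1" "(repunit b m * b + 1) div b = repunit b m"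
    using Suc.prems by (simp_all add: mod_Suc div_Suc)
  then show ?case
    using Suc T_pos[of "repunit b m * b + 1" b e] by simp
qed simp

lemma finite_nat_set_bounded_power:
  assumes "finite (N :: nat set)" and "2 \<le> b"
  obtains k where "\<forall>n\<in>N. n < b ^ k"
proof -
  obtain k where k: "\<forall>n\<in>N. n < k"
    using assms(1) finite_nat_set_iff_bounded by blast
  have "k < b ^ k"
    using less_exp[of k] power_mono[OF assms(2), of k] by linarith
  then show ?thesis
    using k that by (meson less_trans)
qed

lemma funpow_T_shift:
  assumes e: "1 \<le> e" and b: "2 \<le> b"
  shows "finite N \<Longrightarrow> \<exists>c. \<forall>n\<in>N. (T e b ^^ R) (c + n) = g + (T e b ^^ R) n"
proof (induction R arbitrary: N)
  case 0
  then show ?case by auto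
next
  case (Suc R)
  obtain c' where c': "\<forall>m\<in>T e b ` N. (T e b ^^ R) (c' + m) = g + (T e b ^^ R) m"
    using Suc by blast
  obtain k where k: "\<forall>n\<in>N. n < b ^ k"
    using finite_nat_set_bounded_power[OF Suc.prems b] by blast
  have "T e b (repunit b c' * b ^ k + n) = c' + T e b n" if "n \<in> N" for n
    using T_mult_power_add[OF e b] T_repunit[OF b] k that by simp
  then have "\<forall>n\<in>N. (T e b ^^ Suc R) (repunit b c' * b ^ k + n) = g + (T e b ^^ Suc R) n"
    using c' by (simp add: funpow_Suc_right del: funpow.simps)
  then show ?case by blast
qed

lemma T_le_digit_bound:
  assumes "2 \<le> b"
  shows "T e b n \<le> (b - 1) ^ e + T e b (n div b)"
proof (cases "n = 0")
  case False
  have "n mod b \<le> b - 1"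
    using assms mod_less_divisor[of b n] by linarith
  then show ?thesis
    using False assms by (simp add: T_pos power_mono)
qed simp

lemma add_div_less:
  fixes b m n :: nat
  assumes "2 \<le> b" and "b * Suc m \<le> n"
  shows "m + n div b < n"
proof -
  have "Suc m \<le> n div b"
    using assms by (metis div_le_mono nonzero_mult_div_cancel_left not_numeral_le_zero)
  moreover have "2 * (n div b) \<le> n"
    using assms(1) by (metis mult_le_mono1 div_times_less_eq_dividend le_trans mult.commute)
  ultimately show ?thesis by linarith
qed

lemma T_le_add_const: "2 \<le> b \<Longrightarrow> \<exists>K. \<forall>n. T e b n \<le> n + K"
proof -
  assume b: "2 \<le> b"
  define P where "P = (b - 1) ^ e"
  define K where "K = Max (T e b ` {..<b * Suc P})"
  have "T e b n \<le> n + K" for n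
  proof (induction n rule: less_induct)
    case (less n)
    show ?case
    proof (cases "n < b * Suc P")
      case True
      then show ?thesis unfolding K_def by (simp add: trans_le_add2)
    next
      case False
      have "n div b < n"
        using False b by simp
      then have "T e b n \<le> P + (n div b + K)"
        using T_le_digit_bound[OF b, of e n] less.IH unfolding P_def by fastforce
      then show ?thesis
        using add_div_less[OF b, of P n] False by linarith
    qed
  qed
  then show ?thesis by blast
qed

lemma T_less_eventually: "2 \<le> b \<Longrightarrow> \<exists>B. \<forall>n\<ge>B. T e b n < n"
proof -
  assume b: "2 \<le> b"
  obtain K where K: "\<And>n. T e b n \<le> n + K"
    using T_le_add_const[OF b] by blast
  define P where "P = (b - 1) ^ e"
  have "T e b n < n" if "b * Suc (P + K) \<le> n" for n
  proof -
    have "T e b n \<le> (P + K) + n div b"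
      using T_le_digit_bound[OF b, of e n] K[of "n div b"] unfolding P_def by linarith
    then show ?thesis
      using add_div_less[OF b that] by linarith
  qed
  then show ?thesis by blast
qed

lemma periodic_point_le_Max:
  fixes f :: "nat \<Rightarrow> nat"
  assumes less: "\<forall>n\<ge>B. f n < n" and "1 \<le> r" and x: "(f ^^ r) x = x"
  shows "x \<le> Max (f ` {..<B})"
proof -
  define orbit where "orbit = (\<lambda>j. (f ^^ j) x) ` {..<r}"
  have finite: "finite orbit" and "x \<in> orbit"
    using \<open>1 \<le> r\<close> by (auto simp: orbit_def intro: image_eqI[of _ _ 0])
  then have max: "Max orbit \<in> orbit" "x \<le> Max orbit"
    by (auto intro: Max_in)
  have "orbit \<subseteq> f ` orbit"
  proof
    fix y assume "y \<in> orbit"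
    then obtain j where j: "j < r" "y = (f ^^ j) x"
      unfolding orbit_def by blast
    show "y \<in> f ` orbit"
    proof (cases j)
      case 0
      then have "y = f ((f ^^ (r - 1)) x)"
        using j x \<open>1 \<le> r\<close> by (metis Suc_diff_1 funpow.simps(2) funpow_0 o_apply)
      then show ?thesis
        using \<open>1 \<le> r\<close> unfolding orbit_def by force
    next
      case (Suc i)
      then show ?thesis
        using j unfolding orbit_def by force
    qed
  qed
  then obtain p where p: "p \<in> orbit" "Max orbit = f p"
    using max by blast
  then have "p < B"
    using less Max_ge[OF finite p(1)] by (metis not_le)
  then have "Max orbit \<le> Max (f ` {..<B})"
    using p(2) by simp
  then show ?thesis
    using max by linarith
qed

lemma cycle_set_finite:
  assumes "2 \<le> b" and "cycle_set e b D"
  shows "finite D"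
proof -
  obtain B where "\<forall>n\<ge>B. T e b n < n"
    using T_less_eventually[OF assms(1)] by blast
  then have "D \<subseteq> {..Max (T e b ` {..<B})}"
    using assms(2) periodic_point_le_Max unfolding cycle_set_def by fastforce
  then show ?thesis
    using finite_subset by blast
qed

lemma funpow_mem_invariant:
  assumes "f ` A \<subseteq> A" and "(f ^^ r) n \<in> A" and "r \<le> s"
  shows "(f ^^ s) n \<in> A"
proof -
  have "(f ^^ i) a \<in> A" if "a \<in> A" for i a
    using that assms(1) by (induction i) auto
  then show ?thesis
    using assms(2,3) funpow_add[of "s - r" r f] by (simp add: image_subset_iff)
qed

lemma funpow_T_eq_1_mono:
  assumes "2 \<le> b" and "(T e b ^^ r) n = 1" and "r \<le> s"
  shows "(T e b ^^ s) n = 1"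
  using funpow_mem_invariant[of "T e b" "{1}"] T_1 assms by simp

lemma cycle_set_sends_subset_to_1:
  assumes e: "1 \<le> e" and b: "2 \<le> b" and D: "cycle_set e b D"
    and hyp: "\<forall>x\<in>D. \<exists>h>0. happy e b (h + 1) \<and> happy e b (h + x)"
  shows "finite S \<Longrightarrow> S \<subseteq> D \<Longrightarrow> \<exists>h>0. \<exists>R. \<forall>y\<in>S. (T e b ^^ R) (h + y) = 1"
proof (induction S rule: finite_induct)
  case empty
  then show ?case by blast
next
  case (insert x S)
  obtain h R where h: "0 < h" "\<forall>y\<in>S. (T e b ^^ R) (h + y) = 1"
    using insert by auto
  obtain r0 where "(T e b ^^ r0) (h + x) \<in> D"
    using D h(1) unfolding cycle_set_def by (meson add_pos_nonneg zero_le)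
  then have "(T e b ^^ (r0 + R)) (h + x) \<in> D"
    using funpow_mem_invariant[of "T e b" D r0 "h + x" "r0 + R"] D
    unfolding cycle_set_def by auto
  then obtain g r1 r2 where g: "(T e b ^^ r1) (g + 1) = 1"
    "(T e b ^^ r2) (g + (T e b ^^ (r0 + R)) (h + x)) = 1"
    using hyp unfolding happy_def by blast
  have S_1: "(T e b ^^ (r0 + R)) (h + y) = 1" if "y \<in> S" for y
    using funpow_T_eq_1_mono[OF b, where r = R and s = "r0 + R"] h(2) that by simp
  obtain c where c: "\<forall>n\<in>(+) h ` insert x S.
      (T e b ^^ (r0 + R)) (c + n) = g + (T e b ^^ (r0 + R)) n"
    using funpow_T_shift[OF e b, where N = "(+) h ` insert x S" and R = "r0 + R" and g = g]
      insert.hyps(1) by auto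
  have "(T e b ^^ (r1 + r2 + (r0 + R))) (c + h + y) = 1" if y: "y \<in> insert x S" for y
  proof -
    have "(T e b ^^ (r1 + r2 + (r0 + R))) (c + h + y)
        = (T e b ^^ (r1 + r2)) ((T e b ^^ (r0 + R)) (c + (h + y)))"
      by (simp only: funpow_add[of "r1 + r2" "r0 + R"] comp_apply add.assoc[of c h y])
    also have "\<dots> = (T e b ^^ (r1 + r2)) (g + (T e b ^^ (r0 + R)) (h + y))"
      using c y by auto
    also have "\<dots> = 1"
      using y g S_1 funpow_T_eq_1_mono[OF b] by auto
    finally show ?thesis .
  qed
  moreover have "0 < c + h"
    using h(1) by simp
  ultimately show ?case
    by blast
qed

theorem lemma2p2:
  fixes e b :: nat and D :: "nat set"
  assumes "e \<ge> 1" and "b \<ge> 2" and "even b"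
    and "cycle_set e b D"
    and "\<forall>x\<in>D. \<exists>h>0. happy e b (h + 1) \<and> happy e b (h + x)"
  shows "\<exists>h>0. \<forall>x\<in>D. happy e b (h + x)"
proof -
  have "finite D"
    using cycle_set_finite assms(2,4) by blast
  then obtain h R where "0 < h" "\<forall>y\<in>D. (T e b ^^ R) (h + y) = 1"
    using cycle_set_sends_subset_to_1[OF assms(1,2,4,5), of D] by blast
  then show ?thesis
    unfolding happy_def by auto
qed

end
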